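(* Let $\mathcal{A}$ be a unital algebra over a field $F$ with $\operatorname{char}(F)\neq 2$. Then: (a) if $Z_J(\mathcal{A})=Z(\mathcal{A})$, then $\operatorname{JCent}(\mathcal{A})=\operatorname{Cent}(\mathcal{A})$; (b) if $Z_Q(\mathcal{A})=Z(\mathcal{A})$, then $\operatorname{QJCent}(\mathcal{A})=\operatorname{Cent}(\mathcal{A})$; (c) if $Z_Q(\mathcal{A})=Z_J(\mathcal{A})$, then $\operatorname{QJCent}(\mathcal{A})=\operatorname{JCent}(\mathcal{A})$.
   Context: $x\circ y=xy+yx$, $[x,y]=xy-yx$. $Z(\mathcal{A})$ is the center. $Z_J(\mathcal{A})=\{a: [[a,x],y]=0\ \forall x,y\in\mathcal{A}\}$, $Z_Q(\mathcal{A})=\{a: [a,[x,y]]=0\ \forall x,y\in\mathcal{A}\}$. $\operatorname{Cent}(\mathcal{A})$: linear $f:\mathcal{A}\to\mathcal{A}$ with $f(xy)=f(x)y=xf(y)$ for all $x,y$. $\operatorname{JCent}(\mathcal{A})$: linear $f$ with $f(x\circ y)=f(x)\circ y$ for all $x,y$. $\operatorname{QJCent}(\mathcal{A})$: linear $f$ with $f(x)\circ y=x\circ f(y)$ for all $x,y$. *)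

theory Defs
  imports Complex_Main
begin

definition unital_algebra :: "('k::field \<Rightarrow> 'a::ring_1 \<Rightarrow> 'a) \<Rightarrow> bool" where
  "unital_algebra smult \<longleftrightarrow> vector_space smult \<and>
     (\<forall>c x y. smult c (x * y) = smult c x * y \<and> smult c (x * y) = x * smult c y)"

definition jprod :: "'a::ring \<Rightarrow> 'a \<Rightarrow> 'a" where
  "jprod x y = x * y + y * x"

definition comm :: "'a::ring \<Rightarrow> 'a \<Rightarrow> 'a" where
  "comm x y = x * y - y * x"

definition center :: "'a::ring set" where
  "center = {a. \<forall>x. comm a x = 0}"

definition ZJ :: "'a::ring set" where
  "ZJ = {a. \<forall>x y. comm (comm a x) y = 0}"

definition ZQ :: "'a::ring set" where
  "ZQ = {a. \<forall>x y. comm a (comm x y) = 0}"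

definition Cent :: "('k::field \<Rightarrow> 'a::ring_1 \<Rightarrow> 'a) \<Rightarrow> ('a \<Rightarrow> 'a) set" where
  "Cent smult = {f. Vector_Spaces.linear smult smult f \<and>
      (\<forall>x y. f (x * y) = f x * y \<and> f (x * y) = x * f y)}"

definition JCent :: "('k::field \<Rightarrow> 'a::ring_1 \<Rightarrow> 'a) \<Rightarrow> ('a \<Rightarrow> 'a) set" where
  "JCent smult = {f. Vector_Spaces.linear smult smult f \<and>
      (\<forall>x y. f (jprod x y) = jprod (f x) y)}"

definition QJCent :: "('k::field \<Rightarrow> 'a::ring_1 \<Rightarrow> 'a) \<Rightarrow> ('a \<Rightarrow> 'a) set" where
  "QJCent smult = {f. Vector_Spaces.linear smult smult f \<and>
      (\<forall>x y. jprod (f x) y = jprod x (f y))}"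

end

theory Submission
  imports Defs
begin

text \<open>Every f in Cent, JCent or QJCent satisfies 2 f(x) = a \<circ> x with a = f(1). For a linear
map of this shape, twice f(x \<circ> y) - f(x) \<circ> y is [[a,y],x], twice f(x) \<circ> y - x \<circ> f(y) is
[a,[x,y]], and f lies in Cent iff a is central. As char F \<noteq> 2, each of the three classes thus
consists of these maps with f(1) ranging over Z_J, Z_Q or Z, and equal sets of parameters give
equal classes.\<close>

lemma inj_double_vector_space:
  fixes smult :: "'k::field \<Rightarrow> 'a::ab_group_add \<Rightarrow> 'a"
  assumes "vector_space smult" and "(2::'k) \<noteq> 0"
  shows "inj (\<lambda>x::'a. x + x)"
proof (rule injI)
  interpret vector_space smult by fact
  fix x y :: 'a
  assume "x + x = y + y"
  then have "smult 2 x = smult 2 y"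
    by (metis one_add_one scale_left_distrib scale_one)
  then show "x = y"
    using assms(2) by simp
qed

lemma double_eq_0_iff:
  fixes x :: "'a::monoid_add"
  assumes "inj (\<lambda>x::'a. x + x)"
  shows "x + x = 0 \<longleftrightarrow> x = 0"
  using injD[OF assms, of x 0] by auto

lemma double_jprod_defect:
  fixes f :: "'a::ring \<Rightarrow> 'a"
  assumes "\<And>z. f z + f z = jprod a z"
  shows "(f (jprod x y) - jprod (f x) y) + (f (jprod x y) - jprod (f x) y) = comm (comm a y) x"
proof -
  have "(f (jprod x y) - jprod (f x) y) + (f (jprod x y) - jprod (f x) y)
        = (f (jprod x y) + f (jprod x y)) - jprod (f x + f x) y"
    by (simp add: jprod_def algebra_simps)
  also have "\<dots> = comm (comm a y) x"
    unfolding assms by (simp add: jprod_def comm_def algebra_simps)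
  finally show ?thesis .
qed

lemma double_quasi_jprod_defect:
  fixes f :: "'a::ring \<Rightarrow> 'a"
  assumes "\<And>z. f z + f z = jprod a z"
  shows "(jprod (f x) y - jprod x (f y)) + (jprod (f x) y - jprod x (f y)) = comm a (comm x y)"
proof -
  have "(jprod (f x) y - jprod x (f y)) + (jprod (f x) y - jprod x (f y))
        = jprod (f x + f x) y - jprod x (f y + f y)"
    by (simp add: jprod_def algebra_simps)
  also have "\<dots> = comm a (comm x y)"
    unfolding assms by (simp add: jprod_def comm_def algebra_simps)
  finally show ?thesis .
qed

lemma JCent_double:
  assumes "f \<in> JCent smult"
  shows "f z + f z = jprod (f 1) z"
proof -
  have "f (z + z) = f z + f z"
    using assms Vector_Spaces.linear_iff unfolding JCent_def by blast
  moreover have "f (jprod 1 z) = jprod (f 1) z"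
    using assms unfolding JCent_def by blast
  ultimately show ?thesis
    by (simp add: jprod_def)
qed

lemma QJCent_double:
  assumes "f \<in> QJCent smult"
  shows "f z + f z = jprod (f 1) z"
proof -
  have "jprod (f z) 1 = jprod z (f 1)"
    using assms unfolding QJCent_def by blast
  then show ?thesis
    by (simp add: jprod_def add.commute)
qed

lemma JCent_eq:
  assumes "inj (\<lambda>x::'a. x + x)"
  shows "JCent smult = {f. Vector_Spaces.linear smult smult f
           \<and> (\<forall>z. f z + f z = jprod (f 1) z) \<and> f 1 \<in> (ZJ :: 'a::ring_1 set)}"
proof (intro equalityI subsetI CollectI conjI allI; (elim CollectE conjE)?)
  fix f assume f: "f \<in> JCent smult"
  then show "Vector_Spaces.linear smult smult f"
    unfolding JCent_def by blast
  show "f z + f z = jprod (f 1) z" for z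
    using f by (rule JCent_double)
  have "comm (comm (f 1) y) x = 0" for x y
    using double_jprod_defect[OF JCent_double[OF f], of x y] f unfolding JCent_def by simp
  then show "f 1 \<in> ZJ"
    unfolding ZJ_def by blast
next
  fix f assume lin: "Vector_Spaces.linear smult smult f"
    and double: "\<forall>z. f z + f z = jprod (f 1) z" and "f 1 \<in> ZJ"
  then have "f (jprod x y) = jprod (f x) y" for x y
    using double_jprod_defect[of f "f 1" x y] double_eq_0_iff[OF assms]
    unfolding ZJ_def by simp
  with lin show "f \<in> JCent smult"
    unfolding JCent_def by blast
qed

lemma QJCent_eq:
  assumes "inj (\<lambda>x::'a. x + x)"
  shows "QJCent smult = {f. Vector_Spaces.linear smult smult f
           \<and> (\<forall>z. f z + f z = jprod (f 1) z) \<and> f 1 \<in> (ZQ :: 'a::ring_1 set)}"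
proof (intro equalityI subsetI CollectI conjI allI; (elim CollectE conjE)?)
  fix f assume f: "f \<in> QJCent smult"
  then show "Vector_Spaces.linear smult smult f"
    unfolding QJCent_def by blast
  show "f z + f z = jprod (f 1) z" for z
    using f by (rule QJCent_double)
  have "comm (f 1) (comm x y) = 0" for x y
    using double_quasi_jprod_defect[OF QJCent_double[OF f], of x y] f
    unfolding QJCent_def by simp
  then show "f 1 \<in> ZQ"
    unfolding ZQ_def by blast
next
  fix f assume lin: "Vector_Spaces.linear smult smult f"
    and double: "\<forall>z. f z + f z = jprod (f 1) z" and "f 1 \<in> ZQ"
  then have "jprod (f x) y = jprod x (f y)" for x y
    using double_quasi_jprod_defect[of f "f 1" x y] double_eq_0_iff[OF assms]
    unfolding ZQ_def by simp
  with lin show "f \<in> QJCent smult"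
    unfolding QJCent_def by blast
qed

lemma Cent_eq:
  assumes "inj (\<lambda>x::'a. x + x)"
  shows "Cent smult = {f. Vector_Spaces.linear smult smult f
           \<and> (\<forall>z. f z + f z = jprod (f 1) z) \<and> f 1 \<in> (center :: 'a::ring_1 set)}"
proof (intro equalityI subsetI CollectI conjI allI; (elim CollectE conjE)?)
  fix f assume f: "f \<in> Cent smult"
  then show "Vector_Spaces.linear smult smult f"
    unfolding Cent_def by blast
  have mult: "f (x * y) = f x * y" "f (x * y) = x * f y" for x y
    using f unfolding Cent_def by blast+
  have left: "f z = f 1 * z" for z
    using mult(1)[of 1 z] by simp
  have right: "f z = z * f 1" for z
    using mult(2)[of z 1] by simp
  show "f z + f z = jprod (f 1) z" for z
    unfolding jprod_def using left[of z] right[of z] by simp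
  have "f 1 * x = x * f 1" for x
    using left[of x] right[of x] by simp
  then show "f 1 \<in> center"
    unfolding center_def comm_def by simp
next
  fix f assume lin: "Vector_Spaces.linear smult smult f"
    and double: "\<forall>z. f z + f z = jprod (f 1) z" and "f 1 \<in> center"
  then have central: "f 1 * z = z * f 1" for z
    unfolding center_def comm_def by simp
  have "f z + f z = f 1 * z + f 1 * z" for z
    using double central[of z] unfolding jprod_def by simp
  then have f_eq: "f z = f 1 * z" for z
    using injD[OF assms] by blast
  have "f (x * y) = f x * y \<and> f (x * y) = x * f y" for x y
    unfolding f_eq[of "x * y"] f_eq[of x] f_eq[of y]
    by (simp only: mult.assoc[symmetric] central[of x])
  with lin show "f \<in> Cent smult"
    unfolding Cent_def by blast
qed

theorem corollary3p2:
  fixes smult :: "'k::field \<Rightarrow> 'a::ring_1 \<Rightarrow> 'a"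
  assumes "unital_algebra smult"
    and "(2::'k) \<noteq> 0"
  shows "(ZJ = (center :: 'a set) \<longrightarrow> JCent smult = Cent smult)
       \<and> (ZQ = (center :: 'a set) \<longrightarrow> QJCent smult = Cent smult)
       \<and> (ZQ = (ZJ :: 'a set) \<longrightarrow> QJCent smult = JCent smult)"
proof -
  have double: "inj (\<lambda>x::'a. x + x)"
    using inj_double_vector_space assms unfolding unital_algebra_def by blast
  show ?thesis
    unfolding JCent_eq[OF double] QJCent_eq[OF double] Cent_eq[OF double] by simp
qed

end
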